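(* Let $\mathcal{X}\subset\mathbb{R}^n$ be a convex connected domain and $K:\mathcal{X}\to\mathbb{R}$ a smooth function whose Hessian $G(x)=\nabla^2K(x)$ is invertible for all $x$. Let $\mathcal{U}=\mathbb{R}^m$, $\mathcal{Y}=\mathcal{U}^*\cong\mathbb{R}^m$, let $\sigma$ be an $m\times m$ signature matrix, and consider the smooth system $\dot x=F(x,u)$, $y=H(x,u)$. Then the system is reciprocal with respect to $G$ and $\sigma$ if and only if for all $x,u$ $$\sigma\frac{\partial H(x,u)}{\partial u}=\Big(\frac{\partial H(x,u)}{\partial u}\Big)^\top\sigma,\qquad G(x)\frac{\partial F(x,u)}{\partial u}=\Big(\frac{\partial H(x,u)}{\partial x}\Big)^\top\sigma,\qquad G(x)\frac{\partial F(x,u)}{\partial x}=\Big(\frac{\partial F(x,u)}{\partial x}\Big)^\top G(x).$$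
   Context: A signature matrix is a diagonal matrix with diagonal entries $\pm1$. Partial derivative matrices are Jacobians. On $T^*\mathcal{X}\times\mathcal{U}\times\mathcal{Y}$ with coordinates $(x,p,u,y)$ consider the symplectic form $\omega=\sum_i dp_i\wedge dx_i+\sum_j dy_j\wedge du_j$; a Lagrangian submanifold is a submanifold on which $\omega$ vanishes and which is maximal with this property. The system is reciprocal with respect to $G$ and $\sigma$ if the set $\{(x,p,u,y): p=G(x)F(x,u),\ y=\sigma H(x,u)\}$ is a Lagrangian submanifold of $T^*\mathcal{X}\times\mathcal{U}\times\mathcal{Y}$. *)

theory Defs
  imports "HOL-Analysis.Analysis"
begin

coinductive smooth_on :: "'a::real_normed_vector set \<Rightarrow> ('a \<Rightarrow> 'b::real_normed_vector) \<Rightarrow> bool"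
  where "f differentiable_on S \<Longrightarrow>
         (\<And>v. smooth_on S (\<lambda>x. frechet_derivative f (at x) v)) \<Longrightarrow> smooth_on S f"

definition gradient_vec :: "(real^'n \<Rightarrow> real) \<Rightarrow> real^'n \<Rightarrow> real^'n" where
  "gradient_vec K x = (\<chi> i. frechet_derivative K (at x) (axis i 1))"

definition hessian :: "(real^'n \<Rightarrow> real) \<Rightarrow> real^'n \<Rightarrow> real^'n^'n" where
  "hessian K x = matrix (frechet_derivative (gradient_vec K) (at x))"

definition jac_x :: "(real^'n \<Rightarrow> real^'m \<Rightarrow> real^'k) \<Rightarrow> real^'n \<Rightarrow> real^'m \<Rightarrow> real^'n^'k" where
  "jac_x F x u = matrix (frechet_derivative (\<lambda>x'. F x' u) (at x))"

definition jac_u :: "(real^'n \<Rightarrow> real^'m \<Rightarrow> real^'k) \<Rightarrow> real^'n \<Rightarrow> real^'m \<Rightarrow> real^'m^'k" where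
  "jac_u F x u = matrix (frechet_derivative (\<lambda>u'. F x u') (at u))"

definition signature_matrix :: "real^'m^'m \<Rightarrow> bool" where
  "signature_matrix S \<longleftrightarrow> (\<forall>i j. i \<noteq> j \<longrightarrow> S $ i $ j = 0) \<and> (\<forall>i. S $ i $ i = 1 \<or> S $ i $ i = -1)"

text \<open>The symplectic form on T*X x U x Y (tangent vectors ((dx,dp),(du,dy))):
  omega = sum dp_i /\ dx_i + sum dy_j /\ du_j.\<close>
definition symp_form :: "(((real^'n) \<times> (real^'n)) \<times> ((real^'m) \<times> (real^'m))) \<Rightarrow>
    (((real^'n) \<times> (real^'n)) \<times> ((real^'m) \<times> (real^'m))) \<Rightarrow> real" where
  "symp_form v w = (case v of ((a,b),(c,d)) \<Rightarrow> case w of ((a',b'),(c',d')) \<Rightarrow>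
      b \<bullet> a' - b' \<bullet> a + d \<bullet> c' - d' \<bullet> c)"

definition isotropic_subspace ::
  "(((real^'n) \<times> (real^'n)) \<times> ((real^'m) \<times> (real^'m))) set \<Rightarrow> bool" where
  "isotropic_subspace V \<longleftrightarrow> subspace V \<and> (\<forall>v\<in>V. \<forall>w\<in>V. symp_form v w = 0)"

definition lagrangian_subspace ::
  "(((real^'n) \<times> (real^'n)) \<times> ((real^'m) \<times> (real^'m))) set \<Rightarrow> bool" where
  "lagrangian_subspace V \<longleftrightarrow> isotropic_subspace V \<and>
     (\<forall>W. isotropic_subspace W \<and> V \<subseteq> W \<longrightarrow> W = V)"

text \<open>The set {(x,p,u,y). p = G x F(x,u), y = sigma H(x,u)} (x in X) is the image of
  the graph parametrisation below; its tangent space at the point over (x,u) is the range of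
  the derivative of the parametrisation.  Being a Lagrangian submanifold means every tangent
  space is a Lagrangian subspace.\<close>
definition recip_param where
  "recip_param G S F H = (\<lambda>(x,u). ((x, G x *v F x u), (u, S *v H x u)))"

definition reciprocal ::
  "(real^'n \<Rightarrow> real^'n^'n) \<Rightarrow> real^'m^'m \<Rightarrow> (real^'n) set \<Rightarrow>
   (real^'n \<Rightarrow> real^'m \<Rightarrow> real^'n) \<Rightarrow> (real^'n \<Rightarrow> real^'m \<Rightarrow> real^'m) \<Rightarrow> bool" where
  "reciprocal G S X F H \<longleftrightarrow>
     (\<forall>x\<in>X. \<forall>u. lagrangian_subspace (range (frechet_derivative (recip_param G S F H) (at (x,u)))))"

end

theory Submission
  imports Defs
begin

text \<open>
  At \<open>(x, u)\<close> the tangent space is the graph of the linear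
  map \<open>(a, b) \<mapsto> (A a + B b, C a + D b)\<close> with \<open>A = M + G F\<^sub>x\<close>, \<open>B = G F\<^sub>u\<close>, \<open>C = \<sigma> H\<^sub>x\<close>,
  \<open>D = \<sigma> H\<^sub>u\<close>, where \<open>M a = (DG(x) a) F(x,u)\<close>; such a graph is Lagrangian exactly when \<open>A\<close> and
  \<open>D\<close> are symmetric and \<open>B = C\<^sup>T\<close>. Because \<open>G\<close> is the Hessian of \<open>K\<close>, symmetry of mixed
  partial derivatives of \<open>K\<close> up to order three makes both \<open>G(x)\<close> and \<open>M\<close> symmetric, so the
  symmetry of \<open>A\<close> reduces to that of \<open>G F\<^sub>x\<close>.
\<close>

abbreviation dir_deriv :: "('a::real_normed_vector \<Rightarrow> 'b::real_normed_vector) \<Rightarrow> 'a \<Rightarrow> 'a \<Rightarrow> 'b" where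
  "dir_deriv f v x \<equiv> frechet_derivative f (at x) v"

lemma smooth_on_imp_differentiable_on: "smooth_on S f \<Longrightarrow> f differentiable_on S"
  by (erule smooth_on.cases) simp

lemma smooth_on_dir_deriv: "smooth_on S f \<Longrightarrow> smooth_on S (dir_deriv f v)"
  by (erule smooth_on.cases) simp

lemma smooth_on_imp_differentiable_at:
  "smooth_on S f \<Longrightarrow> open S \<Longrightarrow> x \<in> S \<Longrightarrow> f differentiable (at x)"
  using smooth_on_imp_differentiable_on differentiable_on_eq_differentiable_at by blast

lemma smooth_on_imp_has_derivative:
  "smooth_on S f \<Longrightarrow> open S \<Longrightarrow> x \<in> S \<Longrightarrow> (f has_derivative frechet_derivative f (at x)) (at x)"
  using smooth_on_imp_differentiable_at frechet_derivative_works by blast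

lemma smooth_on_imp_isCont: "smooth_on S f \<Longrightarrow> open S \<Longrightarrow> x \<in> S \<Longrightarrow> isCont f x"
  using smooth_on_imp_differentiable_at differentiable_imp_continuous_within by blast

section \<open>Symmetry of second derivatives\<close>

lemma has_real_derivative_along_line:
  fixes f :: "'a::real_normed_vector \<Rightarrow> real"
  assumes "f differentiable (at (c + s *\<^sub>R w))"
  shows "((\<lambda>s. f (c + s *\<^sub>R w)) has_real_derivative dir_deriv f w (c + s *\<^sub>R w)) (at s)"
proof -
  let ?D = "frechet_derivative f (at (c + s *\<^sub>R w))"
  have f: "(f has_derivative ?D) (at (c + s *\<^sub>R w))"
    using assms frechet_derivative_works by blast
  interpret D: bounded_linear ?D
    using f has_derivative_bounded_linear by blast
  have "((\<lambda>s. c + s *\<^sub>R w) has_derivative (\<lambda>h. h *\<^sub>R w)) (at s)"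
    by (auto intro!: derivative_eq_intros)
  from has_derivative_compose[OF this f] show ?thesis
    by (simp add: has_field_derivative_def D.scale mult_commute_abs)
qed

lemma second_difference_mean_value:
  fixes f :: "'a::real_normed_vector \<Rightarrow> real"
  assumes t: "0 < t"
    and f: "\<And>s r. 0 \<le> s \<Longrightarrow> s \<le> t \<Longrightarrow> 0 \<le> r \<Longrightarrow> r \<le> t \<Longrightarrow>
              f differentiable (at (y + s *\<^sub>R v + r *\<^sub>R w))"
    and f': "\<And>s r. 0 \<le> s \<Longrightarrow> s \<le> t \<Longrightarrow> 0 \<le> r \<Longrightarrow> r \<le> t \<Longrightarrow>
              dir_deriv f v differentiable (at (y + s *\<^sub>R v + r *\<^sub>R w))"
  obtains s r where "0 < s" "s < t" "0 < r" "r < t"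
    "f (y + t *\<^sub>R v + t *\<^sub>R w) - f (y + t *\<^sub>R v) - f (y + t *\<^sub>R w) + f y =
       t\<^sup>2 * dir_deriv (dir_deriv f v) w (y + s *\<^sub>R v + r *\<^sub>R w)"
proof -
  have "\<exists>s. 0 < s \<and> s < t \<and>
      (f (y + t *\<^sub>R w + t *\<^sub>R v) - f (y + t *\<^sub>R v)) - (f (y + t *\<^sub>R w + 0 *\<^sub>R v) - f (y + 0 *\<^sub>R v)) =
      (t - 0) * (dir_deriv f v (y + t *\<^sub>R w + s *\<^sub>R v) - dir_deriv f v (y + s *\<^sub>R v))"
  proof (rule MVT2[OF t], intro DERIV_diff has_real_derivative_along_line)
    fix s assume "0 \<le> s" "s \<le> t"
    then show "f differentiable at (y + t *\<^sub>R w + s *\<^sub>R v)" "f differentiable at (y + s *\<^sub>R v)"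
      using f[of s t] f[of s 0] t by (simp_all add: add_ac)
  qed
  then obtain s where s: "0 < s" "s < t" and
    outer: "f (y + t *\<^sub>R v + t *\<^sub>R w) - f (y + t *\<^sub>R v) - f (y + t *\<^sub>R w) + f y =
      t * (dir_deriv f v (y + s *\<^sub>R v + t *\<^sub>R w) - dir_deriv f v (y + s *\<^sub>R v + 0 *\<^sub>R w))"
    by (auto simp: algebra_simps)
  have "\<exists>r. 0 < r \<and> r < t \<and>
      dir_deriv f v (y + s *\<^sub>R v + t *\<^sub>R w) - dir_deriv f v (y + s *\<^sub>R v + 0 *\<^sub>R w) =
      (t - 0) * dir_deriv (dir_deriv f v) w (y + s *\<^sub>R v + r *\<^sub>R w)"
    using s by (intro MVT2[OF t] has_real_derivative_along_line f') auto
  then obtain r where "0 < r" "r < t"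
    "dir_deriv f v (y + s *\<^sub>R v + t *\<^sub>R w) - dir_deriv f v (y + s *\<^sub>R v + 0 *\<^sub>R w) =
      t * dir_deriv (dir_deriv f v) w (y + s *\<^sub>R v + r *\<^sub>R w)"
    by auto
  with s outer show thesis
    by (intro that[of s r]) (simp_all add: power2_eq_square)
qed

lemma add_scaleR_in_ball:
  fixes y v w :: "'a::real_normed_vector"
  assumes "0 \<le> s" "s \<le> t" "0 \<le> r" "r \<le> t" "t * (norm v + norm w) < d"
  shows "y + s *\<^sub>R v + r *\<^sub>R w \<in> ball y d"
proof -
  have "norm (s *\<^sub>R v + r *\<^sub>R w) \<le> s * norm v + r * norm w"
    using norm_triangle_ineq[of "s *\<^sub>R v" "r *\<^sub>R w"] assms by simp
  also have "\<dots> \<le> t * (norm v + norm w)"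
    using assms by (simp add: distrib_left add_mono mult_right_mono)
  finally show ?thesis
    using assms(5) by (simp add: dist_norm add.assoc flip: minus_add_distrib)
qed

lemma mixed_second_derivatives_meet_in_ball:
  fixes f :: "'a::real_normed_vector \<Rightarrow> real"
  assumes "0 < d"
    and diff: "\<And>z. z \<in> ball y d \<Longrightarrow>
      f differentiable at z \<and> dir_deriv f v differentiable at z \<and> dir_deriv f w differentiable at z"
  obtains p q where "p \<in> ball y d" "q \<in> ball y d"
    "dir_deriv (dir_deriv f v) w p = dir_deriv (dir_deriv f w) v q"
proof -
  define t where "t = d / (norm v + norm w + 1)"
  have "norm v + norm w + 1 > 0"
    using norm_ge_zero[of v] norm_ge_zero[of w] by linarith
  with \<open>0 < d\<close> have "t > 0" "t * (norm v + norm w) < d"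
    by (simp_all add: t_def field_simps)
  then have td: "t * (norm v + norm w) < d" "t * (norm w + norm v) < d"
    by (simp_all add: add.commute)
  have ball_vw: "y + s *\<^sub>R v + r *\<^sub>R w \<in> ball y d"
    and ball_wv: "y + s *\<^sub>R w + r *\<^sub>R v \<in> ball y d"
    if "0 \<le> s" "s \<le> t" "0 \<le> r" "r \<le> t" for s r
    using add_scaleR_in_ball[OF that td(1)] add_scaleR_in_ball[OF that td(2)] by blast+
  \<comment> \<open>The second difference is symmetric in \<open>v\<close> and \<open>w\<close>; the mean value theorem expresses it
    through either mixed derivative.\<close>
  obtain s1 r1 where sr1: "0 < s1" "s1 < t" "0 < r1" "r1 < t"
    and vw: "f (y + t *\<^sub>R v + t *\<^sub>R w) - f (y + t *\<^sub>R v) - f (y + t *\<^sub>R w) + f y =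
           t\<^sup>2 * dir_deriv (dir_deriv f v) w (y + s1 *\<^sub>R v + r1 *\<^sub>R w)"
    using second_difference_mean_value[OF \<open>t > 0\<close>, of f y v w] diff ball_vw by blast
  obtain s2 r2 where sr2: "0 < s2" "s2 < t" "0 < r2" "r2 < t"
    and wv: "f (y + t *\<^sub>R w + t *\<^sub>R v) - f (y + t *\<^sub>R w) - f (y + t *\<^sub>R v) + f y =
           t\<^sup>2 * dir_deriv (dir_deriv f w) v (y + s2 *\<^sub>R w + r2 *\<^sub>R v)"
    using second_difference_mean_value[OF \<open>t > 0\<close>, of f y w v] diff ball_wv by blast
  have swap: "y + t *\<^sub>R w + t *\<^sub>R v = y + t *\<^sub>R v + t *\<^sub>R w"
    by (simp add: add_ac)
  have "t\<^sup>2 * dir_deriv (dir_deriv f v) w (y + s1 *\<^sub>R v + r1 *\<^sub>R w) =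
        t\<^sup>2 * dir_deriv (dir_deriv f w) v (y + s2 *\<^sub>R w + r2 *\<^sub>R v)"
    using vw wv unfolding swap by linarith
  with \<open>t > 0\<close> show thesis
    using that ball_vw[of s1 r1] ball_wv[of s2 r2] sr1 sr2 by simp
qed

theorem second_derivative_symmetric:
  fixes f :: "'a::real_normed_vector \<Rightarrow> real"
  assumes X: "open X" "y \<in> X" and "f differentiable_on X"
    and "dir_deriv f v differentiable_on X" "dir_deriv f w differentiable_on X"
    and cont_vw: "isCont (dir_deriv (dir_deriv f v) w) y"
    and cont_wv: "isCont (dir_deriv (dir_deriv f w) v) y"
  shows "dir_deriv (dir_deriv f v) w y = dir_deriv (dir_deriv f w) v y"
proof -
  let ?h1 = "dir_deriv (dir_deriv f v) w" and ?h2 = "dir_deriv (dir_deriv f w) v"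
  have close: "\<bar>?h1 y - ?h2 y\<bar> < 2 * e" if e: "e > 0" for e
  proof -
    obtain d1 where d1: "d1 > 0" "\<And>z. dist z y < d1 \<Longrightarrow> dist (?h1 z) (?h1 y) < e"
      using cont_vw e unfolding continuous_at_eps_delta by blast
    obtain d2 where d2: "d2 > 0" "\<And>z. dist z y < d2 \<Longrightarrow> dist (?h2 z) (?h2 y) < e"
      using cont_wv e unfolding continuous_at_eps_delta by blast
    obtain d0 where d0: "d0 > 0" "ball y d0 \<subseteq> X"
      using X openE by blast
    define d where "d = min d0 (min d1 d2)"
    have "d > 0" "ball y d \<subseteq> X"
      using d0 d1 d2 by (auto simp: d_def)
    then have "f differentiable at z \<and> dir_deriv f v differentiable at z \<and>
        dir_deriv f w differentiable at z" if "z \<in> ball y d" for z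
      using assms(3-5) X(1) that by (auto simp: differentiable_on_eq_differentiable_at)
    with \<open>d > 0\<close> obtain p q where pq: "p \<in> ball y d" "q \<in> ball y d" "?h1 p = ?h2 q"
      by (rule mixed_second_derivatives_meet_in_ball)
    have "dist (?h1 p) (?h1 y) < e"
      by (rule d1(2)) (use pq in \<open>simp add: d_def dist_commute\<close>)
    moreover have "dist (?h2 q) (?h2 y) < e"
      by (rule d2(2)) (use pq in \<open>simp add: d_def dist_commute\<close>)
    ultimately show ?thesis
      using pq(3) by (simp add: dist_real_def)
  qed
  show ?thesis
  proof (rule ccontr)
    assume "?h1 y \<noteq> ?h2 y"
    then show False
      using close[of "\<bar>?h1 y - ?h2 y\<bar> / 2"] by simp
  qed
qed

lemma smooth_on_dir_deriv_commute:
  fixes f :: "'a::real_normed_vector \<Rightarrow> real"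
  assumes "open X" "y \<in> X" "smooth_on X f"
  shows "dir_deriv (dir_deriv f v) w y = dir_deriv (dir_deriv f w) v y"
  using assms by (intro second_derivative_symmetric smooth_on_imp_differentiable_on
      smooth_on_imp_isCont smooth_on_dir_deriv)

section \<open>Lagrangian graphs\<close>

lemma matrix_eq_transpose_iff_inner:
  fixes A :: "real^'n^'m" and B :: "real^'m^'n"
  shows "A = transpose B \<longleftrightarrow> (\<forall>x y. (A *v x) \<bullet> y = (B *v y) \<bullet> x)"
proof -
  have "A = transpose B \<longleftrightarrow> (\<forall>x. A *v x = transpose B *v x)"
    by (rule matrix_eq)
  also have "\<dots> \<longleftrightarrow> (\<forall>x y. (A *v x) \<bullet> y = (transpose B *v x) \<bullet> y)"
    by (simp add: vector_eq_rdot)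
  also have "\<dots> \<longleftrightarrow> (\<forall>x y. (A *v x) \<bullet> y = (B *v y) \<bullet> x)"
    by (metis inner_commute dot_lmul_matrix transpose_matrix_vector)
  finally show ?thesis .
qed

lemma isotropic_graph_imp_lagrangian:
  fixes P :: "real^'n \<Rightarrow> real^'m \<Rightarrow> real^'n" and Q :: "real^'n \<Rightarrow> real^'m \<Rightarrow> real^'m"
  defines "L \<equiv> \<lambda>(a, b). ((a, P a b), (b, Q a b))"
  assumes iso: "isotropic_subspace (range L)"
  shows "lagrangian_subspace (range L)"
  unfolding lagrangian_subspace_def
proof (intro conjI iso allI impI)
  fix W assume W: "isotropic_subspace W \<and> range L \<subseteq> W"
  have "w \<in> range L" if "w \<in> W" for w
  proof -
    obtain a p b q where w: "w = ((a, p), (b, q))"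
      by (metis prod.exhaust)
    have "L (a, b) \<in> W" "subspace W"
      using W unfolding isotropic_subspace_def by auto
    then have "w - L (a, b) \<in> W"
      using \<open>w \<in> W\<close> subspace_diff by blast
    then have "symp_form (w - L (a, b)) (L (p - P a b, q - Q a b)) = 0"
      using W unfolding isotropic_subspace_def by blast
    \<comment> \<open>\<open>w - L (a, b)\<close> is vertical; pairing it with \<open>L\<close> of its own vertical part gives a sum of squares.\<close>
    then have "(p - P a b) \<bullet> (p - P a b) + (q - Q a b) \<bullet> (q - Q a b) = 0"
      by (simp add: w L_def symp_form_def)
    then have "p = P a b" "q = Q a b"
      by (metis add_nonneg_eq_0_iff inner_ge_zero inner_eq_zero_iff right_minus_eq)+
    then have "w = L (a, b)"
      by (simp add: w L_def)
    then show ?thesis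
      by simp
  qed
  with W show "W = range L"
    by blast
qed

lemma lagrangian_graph_iff:
  fixes A :: "real^'n^'n" and B :: "real^'m^'n" and C :: "real^'n^'m" and D :: "real^'m^'m"
  defines "L \<equiv> \<lambda>(a, b). ((a, A *v a + B *v b), (b, C *v a + D *v b))"
  shows "lagrangian_subspace (range L) \<longleftrightarrow> A = transpose A \<and> B = transpose C \<and> D = transpose D"
proof -
  have "linear L"
    by (rule linearI) (auto simp: L_def split_beta algebra_simps matrix_vector_right_distrib)
  then have "subspace (range L)"
    using linear_subspace_image subspace_UNIV by blast
  have form: "symp_form (L (a, b)) (L (a', b')) =
      ((A *v a) \<bullet> a' - (A *v a') \<bullet> a) + ((B *v b) \<bullet> a' - (C *v a') \<bullet> b)
      - ((B *v b') \<bullet> a - (C *v a) \<bullet> b') + ((D *v b) \<bullet> b' - (D *v b') \<bullet> b)" for a b a' b'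
    by (simp add: L_def symp_form_def inner_add_left)
  have "isotropic_subspace (range L) \<longleftrightarrow> (\<forall>a b a' b'. symp_form (L (a, b)) (L (a', b')) = 0)"
    using \<open>subspace (range L)\<close> by (auto simp: isotropic_subspace_def)
  also have "\<dots> \<longleftrightarrow> A = transpose A \<and> B = transpose C \<and> D = transpose D"
  proof
    assume iso: "\<forall>a b a' b'. symp_form (L (a, b)) (L (a', b')) = 0"
    have "(A *v x) \<bullet> y = (A *v y) \<bullet> x" for x y
      using iso[rule_format, of x 0 y 0] by (simp add: form)
    moreover have "(B *v x) \<bullet> y = (C *v y) \<bullet> x" for x y
      using iso[rule_format, of 0 x y 0] by (simp add: form)
    moreover have "(D *v x) \<bullet> y = (D *v y) \<bullet> x" for x y
      using iso[rule_format, of 0 x 0 y] by (simp add: form)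
    ultimately show "A = transpose A \<and> B = transpose C \<and> D = transpose D"
      unfolding matrix_eq_transpose_iff_inner by blast
  next
    assume "A = transpose A \<and> B = transpose C \<and> D = transpose D"
    then show "\<forall>a b a' b'. symp_form (L (a, b)) (L (a', b')) = 0"
      unfolding matrix_eq_transpose_iff_inner by (simp add: form)
  qed
  finally show ?thesis
    using isotropic_graph_imp_lagrangian[of "\<lambda>a b. A *v a + B *v b" "\<lambda>a b. C *v a + D *v b"]
    unfolding lagrangian_subspace_def L_def by blast
qed

section \<open>Derivative of the graph parametrisation\<close>

lemma bounded_bilinear_matrix_vector_mult:
  "bounded_bilinear ((*v) :: real^'n^'m \<Rightarrow> real^'n \<Rightarrow> real^'m)"
proof -
  have "bilinear ((*v) :: real^'n^'m \<Rightarrow> real^'n \<Rightarrow> real^'m)"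
    unfolding bilinear_def
    by (auto intro!: linearI simp: matrix_vector_mult_add_rdistrib scaleR_matrix_vector_assoc
        matrix_vector_right_distrib matrix_vector_mult_scaleR)
  then show ?thesis
    using bilinear_conv_bounded_bilinear by blast
qed

lemma has_derivative_vec_lambda:
  fixes f :: "'a::real_normed_vector \<Rightarrow> 'b::euclidean_space ^ 'n"
  assumes "\<And>i. ((\<lambda>x. f x $ i) has_derivative f' i) (at x)"
  shows "(f has_derivative (\<lambda>h. \<chi> i. f' i h)) (at x)"
proof -
  have "((\<lambda>x. f x \<bullet> b) has_derivative (\<lambda>h. (\<chi> i. f' i h) \<bullet> b)) (at x)" if "b \<in> Basis" for b
  proof -
    obtain i u where b: "b = axis i u" "u \<in> Basis"
      using \<open>b \<in> Basis\<close> unfolding Basis_vec_def by auto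
    have "((\<lambda>x. f x $ i \<bullet> u) has_derivative (\<lambda>h. f' i h \<bullet> u)) (at x)"
      using bounded_linear.has_derivative[OF bounded_linear_inner_left assms[of i]] .
    then show ?thesis
      by (simp add: b inner_axis)
  qed
  then show ?thesis
    using has_derivative_componentwise_within[of f _ x UNIV] by simp
qed

lemma has_derivative_uncurry_eq_jac:
  fixes F :: "real^'n \<Rightarrow> real^'m \<Rightarrow> real^'k"
  assumes F': "((\<lambda>z. F (fst z) (snd z)) has_derivative F') (at (x, u))"
  shows "F' (a, b) = jac_x F x u *v a + jac_u F x u *v b"
proof -
  interpret F': bounded_linear F'
    using F' has_derivative_bounded_linear by blast
  have "((\<lambda>x'. (x', u)) has_derivative (\<lambda>a. (a, 0))) (at x)"
    by (auto intro!: derivative_eq_intros)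
  from has_derivative_compose[OF this F']
  have Fx: "((\<lambda>x'. F x' u) has_derivative (\<lambda>a. F' (a, 0))) (at x)"
    by simp
  have "((\<lambda>u'. (x, u')) has_derivative (\<lambda>b. (0, b))) (at u)"
    by (auto intro!: derivative_eq_intros)
  from has_derivative_compose[OF this F']
  have Fu: "((\<lambda>u'. F x u') has_derivative (\<lambda>b. F' (0, b))) (at u)"
    by simp
  have "jac_x F x u = matrix (\<lambda>a. F' (a, 0))" "jac_u F x u = matrix (\<lambda>b. F' (0, b))"
    using Fx Fu by (simp_all add: jac_x_def jac_u_def frechet_derivative_at[symmetric])
  moreover have "linear (\<lambda>a. F' (a, 0))" "linear (\<lambda>b. F' (0, b))"
    using Fx Fu has_derivative_linear by blast+
  moreover have "F' (a, b) = F' (a, 0) + F' (0, b)"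
    using F'.add[of "(a, 0)" "(0, b)"] by simp
  ultimately show ?thesis
    by (simp add: matrix_works linear_matrix_vector_mul_eq)
qed

lemma has_derivative_recip_param:
  fixes G :: "real^'n \<Rightarrow> real^'n^'n" and S :: "real^'m^'m"
    and F :: "real^'n \<Rightarrow> real^'m \<Rightarrow> real^'n" and H :: "real^'n \<Rightarrow> real^'m \<Rightarrow> real^'m"
  assumes G': "(G has_derivative G') (at x)"
    and F': "((\<lambda>z. F (fst z) (snd z)) has_derivative F') (at (x, u))"
    and H': "((\<lambda>z. H (fst z) (snd z)) has_derivative H') (at (x, u))"
  shows "(recip_param G S F H has_derivative
           (\<lambda>h. ((fst h, G x *v F' h + G' (fst h) *v F x u), (snd h, S *v H' h)))) (at (x, u))"
proof -
  have fst': "(fst has_derivative fst) (at (x, u))" and snd': "(snd has_derivative snd) (at (x, u))"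
    by (auto intro: has_derivative_fst has_derivative_snd has_derivative_ident)
  have "((\<lambda>z. G (fst z)) has_derivative (\<lambda>h. G' (fst h))) (at (x, u))"
    using has_derivative_compose[OF fst'] G' by simp
  from bounded_bilinear.FDERIV[OF bounded_bilinear_matrix_vector_mult this F']
  have GF: "((\<lambda>z. G (fst z) *v F (fst z) (snd z)) has_derivative
      (\<lambda>h. G x *v F' h + G' (fst h) *v F x u)) (at (x, u))"
    by simp
  have SH: "((\<lambda>z. S *v H (fst z) (snd z)) has_derivative (\<lambda>h. S *v H' h)) (at (x, u))"
    using bounded_linear.has_derivative[OF matrix_vector_mul_bounded_linear H'] .
  show ?thesis
    unfolding recip_param_def case_prod_beta' by (intro has_derivative_Pair fst' snd' GF SH)
qed

section \<open>The Hessian\<close>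

lemma gradient_vec_inner:
  fixes f :: "real^'n \<Rightarrow> real"
  assumes "f differentiable (at x)"
  shows "gradient_vec f x \<bullet> c = dir_deriv f c x"
proof -
  interpret f': linear "frechet_derivative f (at x)"
    using assms by (rule linear_frechet_derivative)
  have "dir_deriv f c x = frechet_derivative f (at x) (\<Sum>i\<in>UNIV. c $ i *\<^sub>R axis i 1)"
    using basis_expansion[of c] by (simp add: scalar_mult_eq_scaleR)
  also have "\<dots> = (\<Sum>i\<in>UNIV. c $ i * dir_deriv f (axis i 1) x)"
    by (simp add: f'.sum f'.scale)
  also have "\<dots> = gradient_vec f x \<bullet> c"
    by (simp add: gradient_vec_def inner_vec_def mult.commute)
  finally show ?thesis ..
qed

context
  fixes K :: "real^'n \<Rightarrow> real" and X :: "(real^'n) set"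
  assumes X: "open X" and K: "smooth_on X K"
begin

lemma hessian_mult_inner:
  assumes x: "x \<in> X"
  shows "(hessian K x *v h) \<bullet> c = dir_deriv (dir_deriv K c) h x"
proof -
  define D where "D = (\<lambda>h. \<chi> i. dir_deriv (dir_deriv K (axis i 1)) h x)"
  have D: "(gradient_vec K has_derivative D) (at x)"
    unfolding gradient_vec_def D_def
    by (rule has_derivative_vec_lambda)
      (simp add: smooth_on_imp_has_derivative[OF smooth_on_dir_deriv[OF K] X x])
  then have "hessian K x *v h = D h"
    using has_derivative_linear[OF D]
    by (simp add: hessian_def frechet_derivative_at[symmetric] matrix_works linear_matrix_vector_mul_eq)
  moreover have "((\<lambda>z. gradient_vec K z \<bullet> c) has_derivative (\<lambda>h. D h \<bullet> c)) (at x)"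
    using bounded_linear.has_derivative[OF bounded_linear_inner_left D] .
  then have "(dir_deriv K c has_derivative (\<lambda>h. D h \<bullet> c)) (at x)"
    by (rule has_derivative_transform_within_open[OF _ X x])
      (simp add: gradient_vec_inner smooth_on_imp_differentiable_at[OF K X])
  ultimately show ?thesis
    by (simp add: frechet_derivative_at[symmetric])
qed

lemma hessian_mult_inner_swap:
  assumes "x \<in> X"
  shows "(hessian K x *v h) \<bullet> c = dir_deriv (dir_deriv K h) c x"
  using hessian_mult_inner[OF assms] smooth_on_dir_deriv_commute[OF X(1) assms K] by simp

lemma transpose_hessian:
  assumes "x \<in> X"
  shows "transpose (hessian K x) = hessian K x"
  using hessian_mult_inner[OF assms] hessian_mult_inner_swap[OF assms]
  by (metis matrix_eq_transpose_iff_inner)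

lemma has_derivative_hessian:
  assumes x: "x \<in> X"
  shows "(hessian K has_derivative frechet_derivative (hessian K) (at x)) (at x)"
proof -
  have entry: "hessian K z $ i $ k = (hessian K z *v axis k 1) \<bullet> axis i 1" for z i k
    by (simp add: matrix_vector_mult_basis inner_axis column_def)
  have "((\<lambda>z. \<chi> i k. dir_deriv (dir_deriv K (axis i 1)) (axis k 1) z) has_derivative
      (\<lambda>h. \<chi> i k. dir_deriv (dir_deriv (dir_deriv K (axis i 1)) (axis k 1)) h x)) (at x)"
    by (intro has_derivative_vec_lambda)
      (simp add: smooth_on_imp_has_derivative[OF smooth_on_dir_deriv[OF smooth_on_dir_deriv[OF K]] X x])
  then have "(hessian K has_derivative
      (\<lambda>h. \<chi> i k. dir_deriv (dir_deriv (dir_deriv K (axis i 1)) (axis k 1)) h x)) (at x)"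
    by (rule has_derivative_transform_within_open[OF _ X x])
      (simp add: vec_eq_iff entry hessian_mult_inner)
  then show ?thesis
    by (simp add: frechet_derivative_at[symmetric])
qed

lemma hessian_derivative_symmetric:
  assumes x: "x \<in> X"
  shows "(frechet_derivative (hessian K) (at x) a *v c) \<bullet> b =
         (frechet_derivative (hessian K) (at x) b *v c) \<bullet> a"
proof -
  let ?G' = "frechet_derivative (hessian K) (at x)"
  have third: "(?G' a *v c) \<bullet> b = dir_deriv (dir_deriv (dir_deriv K c) b) a x" for a b
  proof -
    have "bounded_linear (\<lambda>M. (M *v c) \<bullet> b)"
      using bounded_linear_compose[OF bounded_linear_inner_left
          bounded_bilinear.bounded_linear_left[OF bounded_bilinear_matrix_vector_mult]] .
    from bounded_linear.has_derivative[OF this has_derivative_hessian[OF x]]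
    have "((\<lambda>z. (hessian K z *v c) \<bullet> b) has_derivative (\<lambda>a. (?G' a *v c) \<bullet> b)) (at x)" .
    then have "(dir_deriv (dir_deriv K c) b has_derivative (\<lambda>a. (?G' a *v c) \<bullet> b)) (at x)"
      by (rule has_derivative_transform_within_open[OF _ X x]) (rule hessian_mult_inner_swap)
    then show ?thesis
      using frechet_derivative_at by metis
  qed
  show ?thesis
    unfolding third using smooth_on_dir_deriv_commute[OF X(1) x smooth_on_dir_deriv[OF K]] .
qed

end

lemma matrix_apply_mult_vector:
  fixes G' :: "real^'n \<Rightarrow> real^'k^'m"
  assumes "bounded_linear G'"
  shows "matrix (\<lambda>a. G' a *v c) *v a = G' a *v c"
proof -
  have "bounded_linear (\<lambda>a. G' a *v c)"
    using bounded_linear_compose[OF bounded_bilinear.bounded_linear_left[OF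
          bounded_bilinear_matrix_vector_mult] assms] .
  then show ?thesis
    by (simp add: matrix_works linear_matrix_vector_mul_eq bounded_linear.linear)
qed

lemma frechet_derivative_recip_param:
  fixes G :: "real^'n \<Rightarrow> real^'n^'n" and S :: "real^'m^'m"
    and F :: "real^'n \<Rightarrow> real^'m \<Rightarrow> real^'n" and H :: "real^'n \<Rightarrow> real^'m \<Rightarrow> real^'m"
  assumes G': "(G has_derivative G') (at x)"
    and F: "(\<lambda>z. F (fst z) (snd z)) differentiable (at (x, u))"
    and H: "(\<lambda>z. H (fst z) (snd z)) differentiable (at (x, u))"
  shows "frechet_derivative (recip_param G S F H) (at (x, u)) =
    (\<lambda>(a, b). ((a, (matrix (\<lambda>a. G' a *v F x u) + G x ** jac_x F x u) *v a + (G x ** jac_u F x u) *v b),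
               (b, (S ** jac_x H x u) *v a + (S ** jac_u H x u) *v b)))"
proof -
  let ?Fz = "\<lambda>z. F (fst z) (snd z)" and ?Hz = "\<lambda>z. H (fst z) (snd z)"
  have F': "(?Fz has_derivative frechet_derivative ?Fz (at (x, u))) (at (x, u))"
    and H': "(?Hz has_derivative frechet_derivative ?Hz (at (x, u))) (at (x, u))"
    using F H by (simp_all add: frechet_derivative_works)
  have "frechet_derivative (recip_param G S F H) (at (x, u)) =
      (\<lambda>h. ((fst h, G x *v frechet_derivative ?Fz (at (x, u)) h + G' (fst h) *v F x u),
             (snd h, S *v frechet_derivative ?Hz (at (x, u)) h)))"
    using has_derivative_recip_param[OF G' F' H', of S] by (rule frechet_derivative_at[symmetric])
  also have "\<dots> =
    (\<lambda>(a, b). ((a, (matrix (\<lambda>a. G' a *v F x u) + G x ** jac_x F x u) *v a + (G x ** jac_u F x u) *v b),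
               (b, (S ** jac_x H x u) *v a + (S ** jac_u H x u) *v b)))"
    using has_derivative_bounded_linear[OF G']
    by (auto simp: has_derivative_uncurry_eq_jac[OF F'] has_derivative_uncurry_eq_jac[OF H']
        matrix_apply_mult_vector matrix_vector_mult_add_rdistrib matrix_vector_right_distrib
        matrix_vector_mul_assoc)
  finally show ?thesis .
qed

lemma lagrangian_tangent_space_iff:
  fixes G :: "real^'n \<Rightarrow> real^'n^'n" and S :: "real^'m^'m"
    and F :: "real^'n \<Rightarrow> real^'m \<Rightarrow> real^'n" and H :: "real^'n \<Rightarrow> real^'m \<Rightarrow> real^'m"
  assumes G': "(G has_derivative G') (at x)"
    and G_sym: "transpose (G x) = G x"
    and G'_sym: "\<And>a b. (G' a *v F x u) \<bullet> b = (G' b *v F x u) \<bullet> a"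
    and S_sym: "transpose S = S"
    and F: "(\<lambda>z. F (fst z) (snd z)) differentiable (at (x, u))"
    and H: "(\<lambda>z. H (fst z) (snd z)) differentiable (at (x, u))"
  shows "lagrangian_subspace (range (frechet_derivative (recip_param G S F H) (at (x, u)))) \<longleftrightarrow>
    S ** jac_u H x u = transpose (jac_u H x u) ** S \<and>
    G x ** jac_u F x u = transpose (jac_x H x u) ** S \<and>
    G x ** jac_x F x u = transpose (jac_x F x u) ** G x"
proof -
  let ?M = "matrix (\<lambda>a. G' a *v F x u)"
  have "?M = transpose ?M"
    unfolding matrix_eq_transpose_iff_inner
    using G'_sym matrix_apply_mult_vector[OF has_derivative_bounded_linear[OF G']] by simp
  moreover have "transpose (A + B) = transpose A + transpose B" for A B :: "real^'n^'n"
    by (simp add: transpose_def vec_eq_iff)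
  ultimately have "transpose (?M + G x ** jac_x F x u) = ?M + transpose (jac_x F x u) ** G x"
    using G_sym by (simp add: matrix_transpose_mul)
  then show ?thesis
    by (auto simp: frechet_derivative_recip_param[OF G' F H] lagrangian_graph_iff
        matrix_transpose_mul S_sym)
qed

lemma signature_matrix_imp_symmetric:
  assumes "signature_matrix S"
  shows "transpose S = S"
proof -
  have "S $ j $ i = S $ i $ j" for i j
    using assms unfolding signature_matrix_def by (cases "i = j") auto
  then show ?thesis
    by (simp add: transpose_def vec_eq_iff)
qed

theorem proposition3p6:
  fixes X :: "(real^'n) set" and K :: "real^'n \<Rightarrow> real"
    and S :: "real^'m^'m"
    and F :: "real^'n \<Rightarrow> real^'m \<Rightarrow> real^'n" and H :: "real^'n \<Rightarrow> real^'m \<Rightarrow> real^'m"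
  assumes "open X" and "convex X" and "connected X"
    and "smooth_on X K"
    and "\<forall>x\<in>X. invertible (hessian K x)"
    and "signature_matrix S"
    and "smooth_on (X \<times> UNIV) (\<lambda>z. F (fst z) (snd z))"
    and "smooth_on (X \<times> UNIV) (\<lambda>z. H (fst z) (snd z))"
  shows "reciprocal (hessian K) S X F H \<longleftrightarrow>
    (\<forall>x\<in>X. \<forall>u.
       S ** jac_u H x u = transpose (jac_u H x u) ** S \<and>
       hessian K x ** jac_u F x u = transpose (jac_x H x u) ** S \<and>
       hessian K x ** jac_x F x u = transpose (jac_x F x u) ** hessian K x)"
proof -
  have "open (X \<times> (UNIV :: (real^'m) set))"
    by (simp add: open_Times \<open>open X\<close>)
  then have "(\<lambda>z. F (fst z) (snd z)) differentiable (at (x, u))"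
    and "(\<lambda>z. H (fst z) (snd z)) differentiable (at (x, u))" if "x \<in> X" for x u
    using that smooth_on_imp_differentiable_at[OF assms(7)] smooth_on_imp_differentiable_at[OF assms(8)]
    by simp_all
  with signature_matrix_imp_symmetric[OF \<open>signature_matrix S\<close>]
  have "lagrangian_subspace (range (frechet_derivative (recip_param (hessian K) S F H) (at (x, u))))
    \<longleftrightarrow> S ** jac_u H x u = transpose (jac_u H x u) ** S \<and>
       hessian K x ** jac_u F x u = transpose (jac_x H x u) ** S \<and>
       hessian K x ** jac_x F x u = transpose (jac_x F x u) ** hessian K x" if "x \<in> X" for x u
    using \<open>open X\<close> \<open>smooth_on X K\<close> that
    by (intro lagrangian_tangent_space_iff[where G' = "frechet_derivative (hessian K) (at x)"]
        has_derivative_hessian transpose_hessian hessian_derivative_symmetric) auto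
  then show ?thesis
    unfolding reciprocal_def by blast
qed

end
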